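(* Let $\mu\in\mathbb{Z}_{\ge0}^m$ and let $\nu\in\{0,\dots,m\}^n$ be non-increasing ($\nu_1\ge\dots\ge\nu_n$), and let $t=\alpha^\mu\beta^\nu$. Let $F_\nu\in\{0,1\}^{m\times n}$ be the bottom-left flushed matrix with $cs(F_\nu)=\nu$. For $\mathcal{R}\in\{0,1\}^{m\times n}$ the following are equivalent: (1) $\mathcal{R}$ is a res-representation of $t$; (2) $(\mathcal{R},F_\nu)$ is a sorted-flushed syl-representation of $t$.
   Context: For $M\in\{0,1\}^{m\times n}$: $\bar M_{ij}=1-M_{ij}$; $rs(M)=(\sum_j M_{ij})_i$; $cs(M)=(\sum_i M_{ij})_j$; $ars(M)=(i+\sum_j M_{ij})_{i=1..m}$; $acs(M)=(j+\sum_i M_{ij})_{j=1..n}$. $M$ is bottom-left flushed if whenever $M_{ij}=1$, also $M_{i'j'}=1$ for all $i'\ge i$, $j'\le j$ (so $F_\nu$ has $(F_\nu)_{ij}=1$ iff $i>m-\nu_j$). A res-representation of $\alpha^\mu\beta^\nu$ is $\mathcal{R}\in\{0,1\}^{m\times n}$ with $rs(\mathcal{R})=\mu$, $cs(\bar{\mathcal{R}})=\nu$. $PC(A,B)$ means $\{acs(A)_1,\dots,acs(A)_n,ars(B)_1,\dots,ars(B)_m\}=\{1,\dots,m+n\}$. A syl-representation of $\alpha^\mu\beta^\nu$ is a pair $(\mathcal{S}_1,\mathcal{S}_2)$ in $\{0,1\}^{m\times n}$ with $rs(\mathcal{S}_1)=\mu$, $cs(\mathcal{S}_2)=\nu$,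 $PC(\mathcal{S}_1,\mathcal{S}_2)$. A pair $(A,B)$ is sorted if $acs(A)$ and $ars(B)$ are strictly increasing, flushed if $B$ is bottom-left flushed, sorted-flushed if both. *)

theory Defs
  imports Main
begin

text \<open>Matrices in {0,1}^{m x n} are functions nat => nat => nat, with rows indexed
  by 1..m and columns by 1..n (entries outside this range are irrelevant).
  Vectors are functions nat => nat indexed from 1.\<close>

definition is01 :: "nat \<Rightarrow> nat \<Rightarrow> (nat \<Rightarrow> nat \<Rightarrow> nat) \<Rightarrow> bool" where
  "is01 m n M \<longleftrightarrow> (\<forall>i\<in>{1..m}. \<forall>j\<in>{1..n}. M i j \<in> {0,1})"

definition compl01 :: "(nat \<Rightarrow> nat \<Rightarrow> nat) \<Rightarrow> (nat \<Rightarrow> nat \<Rightarrow> nat)" where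
  "compl01 M = (\<lambda>i j. 1 - M i j)"

definition rs :: "nat \<Rightarrow> (nat \<Rightarrow> nat \<Rightarrow> nat) \<Rightarrow> nat \<Rightarrow> nat" where
  "rs n M i = (\<Sum>j=1..n. M i j)"

definition cs :: "nat \<Rightarrow> (nat \<Rightarrow> nat \<Rightarrow> nat) \<Rightarrow> nat \<Rightarrow> nat" where
  "cs m M j = (\<Sum>i=1..m. M i j)"

definition ars :: "nat \<Rightarrow> (nat \<Rightarrow> nat \<Rightarrow> nat) \<Rightarrow> nat \<Rightarrow> nat" where
  "ars n M i = i + rs n M i"

definition acs :: "nat \<Rightarrow> (nat \<Rightarrow> nat \<Rightarrow> nat) \<Rightarrow> nat \<Rightarrow> nat" where
  "acs m M j = j + cs m M j"

definition bl_flushed :: "nat \<Rightarrow> nat \<Rightarrow> (nat \<Rightarrow> nat \<Rightarrow> nat) \<Rightarrow> bool" where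
  "bl_flushed m n M \<longleftrightarrow>
     (\<forall>i\<in>{1..m}. \<forall>j\<in>{1..n}. \<forall>i'\<in>{1..m}. \<forall>j'\<in>{1..n}.
        M i j = 1 \<and> i \<le> i' \<and> j' \<le> j \<longrightarrow> M i' j' = 1)"

definition Fmat :: "nat \<Rightarrow> (nat \<Rightarrow> nat) \<Rightarrow> (nat \<Rightarrow> nat \<Rightarrow> nat)" where
  "Fmat m nu = (\<lambda>i j. if i > m - nu j then 1 else 0)"

definition res_rep :: "nat \<Rightarrow> nat \<Rightarrow> (nat \<Rightarrow> nat) \<Rightarrow> (nat \<Rightarrow> nat) \<Rightarrow> (nat \<Rightarrow> nat \<Rightarrow> nat) \<Rightarrow> bool" where
  "res_rep m n mu nu R \<longleftrightarrow> is01 m n R \<and>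
     (\<forall>i\<in>{1..m}. rs n R i = mu i) \<and> (\<forall>j\<in>{1..n}. cs m (compl01 R) j = nu j)"

definition PC :: "nat \<Rightarrow> nat \<Rightarrow> (nat \<Rightarrow> nat \<Rightarrow> nat) \<Rightarrow> (nat \<Rightarrow> nat \<Rightarrow> nat) \<Rightarrow> bool" where
  "PC m n A B \<longleftrightarrow> acs m A ` {1..n} \<union> ars n B ` {1..m} = {1..m+n}"

definition syl_rep :: "nat \<Rightarrow> nat \<Rightarrow> (nat \<Rightarrow> nat) \<Rightarrow> (nat \<Rightarrow> nat)
    \<Rightarrow> (nat \<Rightarrow> nat \<Rightarrow> nat) \<Rightarrow> (nat \<Rightarrow> nat \<Rightarrow> nat) \<Rightarrow> bool" where
  "syl_rep m n mu nu S1 S2 \<longleftrightarrow> is01 m n S1 \<and> is01 m n S2 \<and>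
     (\<forall>i\<in>{1..m}. rs n S1 i = mu i) \<and> (\<forall>j\<in>{1..n}. cs m S2 j = nu j) \<and> PC m n S1 S2"

definition sorted_pair :: "nat \<Rightarrow> nat \<Rightarrow> (nat \<Rightarrow> nat \<Rightarrow> nat) \<Rightarrow> (nat \<Rightarrow> nat \<Rightarrow> nat) \<Rightarrow> bool" where
  "sorted_pair m n A B \<longleftrightarrow>
     (\<forall>j\<in>{1..n}. \<forall>j'\<in>{1..n}. j < j' \<longrightarrow> acs m A j < acs m A j') \<and>
     (\<forall>i\<in>{1..m}. \<forall>i'\<in>{1..m}. i < i' \<longrightarrow> ars n B i < ars n B i')"

definition flushed_pair :: "nat \<Rightarrow> nat \<Rightarrow> (nat \<Rightarrow> nat \<Rightarrow> nat) \<Rightarrow> (nat \<Rightarrow> nat \<Rightarrow> nat) \<Rightarrow> bool" where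
  "flushed_pair m n A B \<longleftrightarrow> bl_flushed m n B"

definition sorted_flushed :: "nat \<Rightarrow> nat \<Rightarrow> (nat \<Rightarrow> nat \<Rightarrow> nat) \<Rightarrow> (nat \<Rightarrow> nat \<Rightarrow> nat) \<Rightarrow> bool" where
  "sorted_flushed m n A B \<longleftrightarrow> sorted_pair m n A B \<and> flushed_pair m n A B"

end

theory Submission
  imports Defs
begin

text \<open>For a 0/1 matrix \<open>R\<close>, the condition \<open>cs(compl R) = \<nu>\<close> says exactly that
  \<open>acs(R)\<close> agrees with \<open>acs(compl F\<^sub>\<nu>)\<close>, i.e. \<open>acs(R)\<^sub>j = j + m - \<nu>\<^sub>j\<close>. Along the staircase
  boundary of \<open>F\<^sub>\<nu>\<close>, a lattice path of \<open>n\<close> column steps and \<open>m\<close> row steps, the column steps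
  sit at the positions \<open>acs(compl F\<^sub>\<nu>)\<close> and the row steps at \<open>ars(F\<^sub>\<nu>)\<close>; so these values
  partition \<open>{1..m+n}\<close>. Since \<open>PC(A, F\<^sub>\<nu>)\<close> forces \<open>acs(A)\<close> to enumerate the complement of
  \<open>ars(F\<^sub>\<nu>)\<close> and an increasing enumeration of a set is unique, a sorted \<open>PC(R, F\<^sub>\<nu>)\<close>
  means precisely \<open>acs(R) = acs(compl F\<^sub>\<nu>)\<close>. All other conditions hold for \<open>F\<^sub>\<nu>\<close> outright.\<close>

lemma strict_mono_on_image_eq:
  fixes f g :: "nat \<Rightarrow> 'a::linorder"
  assumes f: "strict_mono_on {1..n} f" and g: "strict_mono_on {1..n} g"
    and image: "f ` {1..n} = g ` {1..n}" and j: "j \<in> {1..n}"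
  shows "f j = g j"
proof -
  have set_map: "set (map h [1..<Suc n]) = h ` {1..n}" for h :: "nat \<Rightarrow> 'a"
    by (simp del: upt_Suc add: atLeastLessThanSuc_atLeastAtMost)
  have "sorted_wrt (<) (map h [1..<Suc n])" if "strict_mono_on {1..n} h" for h :: "nat \<Rightarrow> 'a"
    unfolding sorted_wrt_iff_nth_less
    by (auto simp del: upt_Suc intro!: strict_mono_onD[OF that])
  with f g image have "map f [1..<Suc n] = map g [1..<Suc n]"
    unfolding strict_sorted_iff by (intro sorted_distinct_set_unique) (simp_all only: set_map)
  moreover have "j - 1 < length [1..<Suc n]" and "[1..<Suc n] ! (j - 1) = j"
    using j by (auto simp del: upt_Suc)
  ultimately show ?thesis by (metis nth_map)
qed

lemma downward_closed_eq_atLeastAtMost_card: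
  fixes S :: "nat set"
  assumes "S \<subseteq> {1..n}" and closed: "\<And>j j'. j \<in> S \<Longrightarrow> 1 \<le> j' \<Longrightarrow> j' \<le> j \<Longrightarrow> j' \<in> S"
  shows "S = {1..card S}"
proof (cases "S = {}")
  case False
  have "finite S" using assms(1) finite_subset by blast
  have "S = {1..Max S}"
  proof
    show "S \<subseteq> {1..Max S}"
      using assms(1) \<open>finite S\<close> by (auto intro: Max_ge)
    show "{1..Max S} \<subseteq> S"
      using closed Max_in[OF \<open>finite S\<close> False] by auto
  qed
  then show ?thesis by (metis card_atLeastAtMost diff_Suc_1)
qed simp

lemma is01_le_1:
  assumes "is01 m n A" and "i \<in> {1..m}" and "j \<in> {1..n}"
  shows "A i j \<le> 1"
  using assms unfolding is01_def by fastforce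

lemma cs_le_of_is01:
  assumes "is01 m n A" and "j \<in> {1..n}"
  shows "cs m A j \<le> m"
proof -
  have "cs m A j \<le> (\<Sum>i=1..m. 1)"
    unfolding cs_def using assms by (intro sum_mono is01_le_1) auto
  then show ?thesis by simp
qed

lemma cs_compl01:
  assumes "is01 m n A" and "j \<in> {1..n}"
  shows "cs m (compl01 A) j = m - cs m A j"
proof -
  have "cs m (compl01 A) j = (\<Sum>i=1..m. 1) - (\<Sum>i=1..m. A i j)"
    unfolding cs_def compl01_def using assms
    by (intro sum_subtractf_nat is01_le_1) auto
  then show ?thesis by (simp add: cs_def)
qed

lemma acs_compl01:
  assumes "is01 m n A" and "j \<in> {1..n}"
  shows "acs m (compl01 A) j = j + (m - cs m A j)"
  using cs_compl01[OF assms] by (simp add: acs_def)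

lemma is01_Fmat: "is01 m n (Fmat m nu)"
  by (simp add: is01_def Fmat_def)

lemma cs_Fmat: "cs m (Fmat m nu) j = min (nu j) m"
proof -
  have "cs m (Fmat m nu) j = card ({1..m} \<inter> {i. m - nu j < i})"
    by (simp add: cs_def Fmat_def sum.If_cases)
  also have "{1..m} \<inter> {i. m - nu j < i} = {m - nu j<..m}" by auto
  finally show ?thesis by simp
qed

lemma acs_compl_Fmat:
  assumes "j \<in> {1..n}"
  shows "acs m (compl01 (Fmat m nu)) j = j + (m - nu j)"
  by (simp add: acs_compl01[OF is01_Fmat assms] cs_Fmat)

lemma rs_Fmat: "rs n (Fmat m nu) i = card {j\<in>{1..n}. m - nu j < i}"
  unfolding rs_def Fmat_def by (simp add: sum.If_cases) (rule arg_cong[where f = card]; auto)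

lemma rs_Fmat_mono: "i \<le> i' \<Longrightarrow> rs n (Fmat m nu) i \<le> rs n (Fmat m nu) i'"
  unfolding rs_Fmat by (intro card_mono) auto

lemma rs_Fmat_le: "rs n (Fmat m nu) i \<le> n"
  unfolding rs_Fmat by (rule order_trans[OF card_mono[of "{1..n}"]]) auto

lemma bl_flushed_Fmat:
  assumes "antimono_on {1..n} nu"
  shows "bl_flushed m n (Fmat m nu)"
  unfolding bl_flushed_def Fmat_def
proof (intro ballI impI)
  fix i j i' j' assume "j \<in> {1..n}" "j' \<in> {1..n}"
    and h: "(if m - nu j < i then 1 else 0) = (1::nat) \<and> i \<le> i' \<and> j' \<le> j"
  then have "nu j \<le> nu j'" using monotone_onD[OF assms] by blast
  with h show "(if m - nu j' < i' then 1 else 0) = (1::nat)" by (auto split: if_splits)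
qed

lemma strict_mono_on_ars_Fmat: "strict_mono_on {1..m} (ars n (Fmat m nu))"
  by (intro strict_mono_onI) (simp add: ars_def add_less_le_mono rs_Fmat_mono)

lemma strict_mono_on_acs_compl_Fmat:
  assumes "antimono_on {1..n} nu"
  shows "strict_mono_on {1..n} (acs m (compl01 (Fmat m nu)))"
proof (rule strict_mono_onI)
  fix j j' assume j: "j \<in> {1..n}" "j' \<in> {1..n}" "j < j'"
  then have "nu j' \<le> nu j" using monotone_onD[OF assms] by auto
  with j show "acs m (compl01 (Fmat m nu)) j < acs m (compl01 (Fmat m nu)) j'"
    by (simp add: acs_compl_Fmat[OF j(1)] acs_compl_Fmat[OF j(2)])
qed

lemma Fmat_row_support:
  assumes "antimono_on {1..n} nu"
  shows "{j\<in>{1..n}. m - nu j < i} = {1..rs n (Fmat m nu) i}"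
  unfolding rs_Fmat
proof (rule downward_closed_eq_atLeastAtMost_card)
  fix j j' assume "j \<in> {j\<in>{1..n}. m - nu j < i}" "1 \<le> j'" "j' \<le> j"
  then show "j' \<in> {j\<in>{1..n}. m - nu j < i}"
    using monotone_onD[OF assms, of j' j] by auto
qed auto

lemma PC_disjoint:
  assumes "PC m n A B"
  shows "acs m A ` {1..n} \<inter> ars n B ` {1..m} = {}"
proof -
  let ?X = "acs m A ` {1..n}" and ?Y = "ars n B ` {1..m}"
  have "card ?X + card ?Y = card (?X \<union> ?Y) + card (?X \<inter> ?Y)"
    by (intro card_Un_Int) auto
  moreover have "card (?X \<union> ?Y) = m + n"
    using assms by (simp add: PC_def)
  moreover have "card ?X \<le> n" "card ?Y \<le> m"
    using card_image_le[of "{1..n}" "acs m A"] card_image_le[of "{1..m}" "ars n B"] by auto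
  ultimately have "card (?X \<inter> ?Y) = 0" by linarith
  then show ?thesis by simp
qed

lemma PC_acs_image:
  assumes "PC m n A B"
  shows "acs m A ` {1..n} = {1..m+n} - ars n B ` {1..m}"
  using PC_disjoint[OF assms] assms unfolding PC_def by blast

lemma PCI:
  assumes "inj_on (acs m A) {1..n}" and "inj_on (ars n B) {1..m}"
    and "acs m A ` {1..n} \<inter> ars n B ` {1..m} = {}"
    and "acs m A ` {1..n} \<subseteq> {1..m+n}" and "ars n B ` {1..m} \<subseteq> {1..m+n}"
  shows "PC m n A B"
proof -
  have "card (acs m A ` {1..n} \<union> ars n B ` {1..m}) = card {1..m+n}"
    using assms(1-3) by (simp add: card_Un_disjoint card_image)
  then show ?thesis
    unfolding PC_def using assms(4,5) by (intro card_subset_eq) auto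
qed

lemma PC_acs_unique:
  assumes "PC m n A B" and "PC m n A' B"
    and "strict_mono_on {1..n} (acs m A)" and "strict_mono_on {1..n} (acs m A')"
    and "j \<in> {1..n}"
  shows "acs m A j = acs m A' j"
  by (rule strict_mono_on_image_eq[OF assms(3,4) _ assms(5)])
    (simp only: PC_acs_image[OF assms(1)] PC_acs_image[OF assms(2)])

lemma PC_compl_Fmat:
  assumes anti: "antimono_on {1..n} nu"
  shows "PC m n (compl01 (Fmat m nu)) (Fmat m nu)"
proof (rule PCI)
  show "inj_on (acs m (compl01 (Fmat m nu))) {1..n}"
    using strict_mono_on_acs_compl_Fmat[OF anti] by (rule strict_mono_on_imp_inj_on)
  show "inj_on (ars n (Fmat m nu)) {1..m}"
    using strict_mono_on_ars_Fmat by (rule strict_mono_on_imp_inj_on)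
  show "acs m (compl01 (Fmat m nu)) ` {1..n} \<subseteq> {1..m+n}"
    by (auto simp: acs_compl_Fmat)
  show "ars n (Fmat m nu) ` {1..m} \<subseteq> {1..m+n}"
    using rs_Fmat_le by (auto simp: ars_def add_mono)
  have "acs m (compl01 (Fmat m nu)) j \<noteq> ars n (Fmat m nu) i"
    if j: "j \<in> {1..n}" and "i \<in> {1..m}" for i j
  proof
    assume "acs m (compl01 (Fmat m nu)) j = ars n (Fmat m nu) i"
    then have eq: "j + (m - nu j) = i + rs n (Fmat m nu) i"
      by (simp add: acs_compl_Fmat[OF j] ars_def)
    have "j \<in> {j\<in>{1..n}. m - nu j < i} \<longleftrightarrow> j \<in> {1..rs n (Fmat m nu) i}"
      by (simp only: Fmat_row_support[OF anti])
    then have "j \<le> rs n (Fmat m nu) i \<longleftrightarrow> m - nu j < i"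
      using j by simp
    with eq show False by linarith
  qed
  then show "acs m (compl01 (Fmat m nu)) ` {1..n} \<inter> ars n (Fmat m nu) ` {1..m} = {}"
    by fastforce
qed

lemma PC_Fmat_sorted_iff_acs_eq:
  assumes anti: "antimono_on {1..n} nu"
  shows "PC m n A (Fmat m nu) \<and> strict_mono_on {1..n} (acs m A) \<longleftrightarrow>
         (\<forall>j\<in>{1..n}. acs m A j = acs m (compl01 (Fmat m nu)) j)"
proof
  assume "PC m n A (Fmat m nu) \<and> strict_mono_on {1..n} (acs m A)"
  then show "\<forall>j\<in>{1..n}. acs m A j = acs m (compl01 (Fmat m nu)) j"
    using PC_acs_unique[OF _ PC_compl_Fmat[OF anti] _ strict_mono_on_acs_compl_Fmat[OF anti]]
    by blast
next
  assume eq: "\<forall>j\<in>{1..n}. acs m A j = acs m (compl01 (Fmat m nu)) j"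
  then have "acs m A ` {1..n} = acs m (compl01 (Fmat m nu)) ` {1..n}"
    by (intro image_cong) auto
  then have "PC m n A (Fmat m nu)"
    using PC_compl_Fmat[OF anti] by (simp add: PC_def)
  moreover have "strict_mono_on {1..n} (acs m A)"
    using strict_mono_on_acs_compl_Fmat[OF anti] eq by (simp add: monotone_on_def)
  ultimately show "PC m n A (Fmat m nu) \<and> strict_mono_on {1..n} (acs m A)" ..
qed

lemma cs_compl01_eq_iff_acs_eq:
  assumes "is01 m n R" and j: "j \<in> {1..n}" and "nu j \<le> m"
  shows "cs m (compl01 R) j = nu j \<longleftrightarrow> acs m R j = acs m (compl01 (Fmat m nu)) j"
  using cs_le_of_is01[OF assms(1) j] assms(3)
  unfolding cs_compl01[OF assms(1) j] acs_compl_Fmat[OF j] by (auto simp: acs_def)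

theorem mainTheorem6:
  fixes m n :: nat and mu nu :: "nat \<Rightarrow> nat" and R :: "nat \<Rightarrow> nat \<Rightarrow> nat"
  assumes nu_range: "\<forall>j\<in>{1..n}. nu j \<le> m"
    and nu_noninc: "\<forall>j\<in>{1..n}. \<forall>j'\<in>{1..n}. j \<le> j' \<longrightarrow> nu j' \<le> nu j"
    and R01: "is01 m n R"
  shows "res_rep m n mu nu R \<longleftrightarrow>
         (syl_rep m n mu nu R (Fmat m nu) \<and> sorted_flushed m n R (Fmat m nu))"
proof -
  have anti: "antimono_on {1..n} nu"
    using nu_noninc by (simp add: monotone_on_def)
  have "res_rep m n mu nu R \<longleftrightarrow> (\<forall>i\<in>{1..m}. rs n R i = mu i) \<and>
      (\<forall>j\<in>{1..n}. acs m R j = acs m (compl01 (Fmat m nu)) j)"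
    using R01 nu_range by (simp add: res_rep_def cs_compl01_eq_iff_acs_eq)
  also have "\<dots> \<longleftrightarrow> (\<forall>i\<in>{1..m}. rs n R i = mu i) \<and>
      PC m n R (Fmat m nu) \<and> strict_mono_on {1..n} (acs m R)"
    using PC_Fmat_sorted_iff_acs_eq[OF anti, where A = R] by blast
  also have "\<dots> \<longleftrightarrow> syl_rep m n mu nu R (Fmat m nu) \<and> sorted_flushed m n R (Fmat m nu)"
    using R01 is01_Fmat nu_range bl_flushed_Fmat[OF anti] strict_mono_on_ars_Fmat
    by (auto simp: syl_rep_def sorted_flushed_def sorted_pair_def flushed_pair_def
        cs_Fmat monotone_on_def)
  finally show ?thesis .
qed

end
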